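(* For every $n\in\mathbb N$: (1) $\varphi(L_n)$ is a finite semilattice; (2) $\varphi(L_n\sqcup C_2)$ is a commutative Boolean semigroup isomorphic to the reduced product $\varphi(L_{n+1})\times_{\varphi(L_n)}\varphi(C_2)$.
   Context: An upfamily on $X$ is a family of nonempty subsets closed under supersets; $\varphi(X)$ is the set of filters on $X$ (upfamilies closed under finite intersections), with operation $\mathcal A*\mathcal B=\big\langle \bigcup_{a\in A} a*B_a : A\in\mathcal A,\ \{B_a\}_{a\in A}\subset\mathcal B\big\rangle$, where $\langle\mathcal C\rangle=\{A\subset X:\exists C\in\mathcal C,\ C\subset A\}$. $C_2=\{1,-1\}$ under multiplication; $L_n=\{0,\dots,n-1\}$ with operation $\min$, so $L_n\subset L_{n+1}$, and $\varphi(L_n)$ is identified with the set of filters on $L_{n+1}$ containing $L_n$, which is an ideal of $\varphi(L_{n+1})$. For semigroups $(X,* )$, $(Y,\star)$, the disjoint ordered union $X\sqcup Y$ is the disjoint union with operation $x\circ y=x*y$ for $x,y\in X$; $x\circ y=x$ if $x\in X,y\in Y$; $x\circ y=y$ if $x\in Y,y\in X$; $x\circ y=x\star y$ for $x,y\in Y$. A semigroup is Boolean if $x^3=x$ for all $x$. For semigroups $X,Y$ and an ideal $I$ of $X$ (nonempty $I$ with $XI\cup IX\subset I$), the reduced product $X\times_I Y$ is the set $I\cup((X\setminus I)\times Y)$ with operation $a*b=p_X(a)p_X(b)$ if $p_X(a)p_X(b)\in I$ and $a*b=(p_X(a)p_X(b),\,p_Y(a)p_Y(b))$ otherwise, where $p_X:X\times_IY\to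 X$ is the natural projection (identity on $I$) and $p_Y:(X\setminus I)\times Y\to Y$ is the projection. *)

theory Defs
  imports Main
begin

definition semigroup_on :: "'a set \<Rightarrow> ('a \<Rightarrow> 'a \<Rightarrow> 'a) \<Rightarrow> bool" where
  "semigroup_on S m \<longleftrightarrow> (\<forall>x\<in>S. \<forall>y\<in>S. m x y \<in> S) \<and>
     (\<forall>x\<in>S. \<forall>y\<in>S. \<forall>z\<in>S. m (m x y) z = m x (m y z))"

definition commutative_on :: "'a set \<Rightarrow> ('a \<Rightarrow> 'a \<Rightarrow> 'a) \<Rightarrow> bool" where
  "commutative_on S m \<longleftrightarrow> (\<forall>x\<in>S. \<forall>y\<in>S. m x y = m y x)"

definition semilattice_on :: "'a set \<Rightarrow> ('a \<Rightarrow> 'a \<Rightarrow> 'a) \<Rightarrow> bool" where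
  "semilattice_on S m \<longleftrightarrow> semigroup_on S m \<and> commutative_on S m \<and> (\<forall>x\<in>S. m x x = x)"

definition boolean_on :: "'a set \<Rightarrow> ('a \<Rightarrow> 'a \<Rightarrow> 'a) \<Rightarrow> bool" where
  "boolean_on S m \<longleftrightarrow> (\<forall>x\<in>S. m x (m x x) = x)"

definition semigroup_iso :: "'a set \<Rightarrow> ('a \<Rightarrow> 'a \<Rightarrow> 'a) \<Rightarrow> 'b set \<Rightarrow> ('b \<Rightarrow> 'b \<Rightarrow> 'b) \<Rightarrow> bool" where
  "semigroup_iso S m T m' \<longleftrightarrow>
     (\<exists>h. bij_betw h S T \<and> (\<forall>x\<in>S. \<forall>y\<in>S. h (m x y) = m' (h x) (h y)))"

definition filters :: "'a set \<Rightarrow> 'a set set set" where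
  "filters X = {F. F \<noteq> {} \<and> (\<forall>A\<in>F. A \<noteq> {} \<and> A \<subseteq> X) \<and>
      (\<forall>A\<in>F. \<forall>B. A \<subseteq> B \<and> B \<subseteq> X \<longrightarrow> B \<in> F) \<and>
      (\<forall>A\<in>F. \<forall>B\<in>F. A \<inter> B \<in> F)}"

definition fmul :: "'a set \<Rightarrow> ('a \<Rightarrow> 'a \<Rightarrow> 'a) \<Rightarrow> 'a set set \<Rightarrow> 'a set set \<Rightarrow> 'a set set" where
  "fmul X f \<A> \<B> = {S. S \<subseteq> X \<and> (\<exists>A\<in>\<A>. \<exists>Bf. (\<forall>a\<in>A. Bf a \<in> \<B>) \<and>
        (\<Union>a\<in>A. (\<lambda>b. f a b) ` Bf a) \<subseteq> S)}"

text \<open>L_n = {0,...,n-1} with min; C_2 = {1,-1} with multiplication.\<close>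
definition Ln :: "nat \<Rightarrow> nat set" where "Ln n = {0..<n}"
definition C2 :: "int set" where "C2 = {1, -1}"

definition dou_carrier :: "'a set \<Rightarrow> 'b set \<Rightarrow> ('a + 'b) set" where
  "dou_carrier X Y = Inl ` X \<union> Inr ` Y"

fun dou_mul :: "('a \<Rightarrow> 'a \<Rightarrow> 'a) \<Rightarrow> ('b \<Rightarrow> 'b \<Rightarrow> 'b) \<Rightarrow> ('a + 'b) \<Rightarrow> ('a + 'b) \<Rightarrow> ('a + 'b)" where
  "dou_mul f g (Inl x) (Inl y) = Inl (f x y)"
| "dou_mul f g (Inl x) (Inr y) = Inl x"
| "dou_mul f g (Inr x) (Inl y) = Inl y"
| "dou_mul f g (Inr x) (Inr y) = Inr (g x y)"

text \<open>Reduced product X \<times>_I Y: elements of I are tagged Inl, pairs in (X - I) \<times> Y tagged Inr.\<close>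
definition rp_carrier :: "'a set \<Rightarrow> 'a set \<Rightarrow> 'b set \<Rightarrow> ('a + ('a \<times> 'b)) set" where
  "rp_carrier X I Y = Inl ` I \<union> Inr ` ((X - I) \<times> Y)"

fun rp_pX :: "('a + ('a \<times> 'b)) \<Rightarrow> 'a" where
  "rp_pX (Inl a) = a"
| "rp_pX (Inr p) = fst p"

definition rp_mul :: "'a set \<Rightarrow> ('a \<Rightarrow> 'a \<Rightarrow> 'a) \<Rightarrow> ('b \<Rightarrow> 'b \<Rightarrow> 'b)
     \<Rightarrow> ('a + ('a \<times> 'b)) \<Rightarrow> ('a + ('a \<times> 'b)) \<Rightarrow> ('a + ('a \<times> 'b))" where
  "rp_mul I f g a b =
     (let c = f (rp_pX a) (rp_pX b) in
      if c \<in> I then Inl c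
      else (case (a, b) of (Inr p, Inr q) \<Rightarrow> Inr (c, g (snd p) (snd q)) | _ \<Rightarrow> Inl c))"

end

theory Submission
  imports Defs
begin

(* On a finite set X every filter is principal: it consists of all
   subsets of X containing its least element, the nonempty set B = \<Inter>F.  Under
   this identification the product of filters becomes the pointwise product of
   sets, principal_on X B * principal_on X C = principal_on X (B*C).  Hence \<phi>(X) is
   isomorphic to the semigroup of nonempty subsets of X, and all algebraic
   properties of \<phi>(X) are read off from elementwise properties of X.

   It then specialises to L_n and L_n \<squnion> C_2, and
   builds the isomorphism with the reduced product: a nonempty B \<subseteq> L_n \<squnion> C_2 is
   sent to its image in L_{n+1} (collapsing C_2 to the new top n) and, if B
   meets C_2, additionally to its C_2-part. *)

section \<open>Principal filters and the set product\<close>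

definition principal_on :: "'a set \<Rightarrow> 'a set \<Rightarrow> 'a set set" where
  "principal_on X B = {A. B \<subseteq> A \<and> A \<subseteq> X}"

definition setmul :: "('a \<Rightarrow> 'a \<Rightarrow> 'a) \<Rightarrow> 'a set \<Rightarrow> 'a set \<Rightarrow> 'a set" where
  "setmul f A B = (\<Union>a\<in>A. f a ` B)"

definition nonempty_subsets :: "'a set \<Rightarrow> 'a set set" where
  "nonempty_subsets X = {B. B \<noteq> {} \<and> B \<subseteq> X}"

lemma setmul_iff: "x \<in> setmul f A B \<longleftrightarrow> (\<exists>a\<in>A. \<exists>b\<in>B. x = f a b)"
  unfolding setmul_def by auto

lemma principal_in_filters: "B \<noteq> {} \<Longrightarrow> B \<subseteq> X \<Longrightarrow> principal_on X B \<in> filters X"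
  unfolding filters_def principal_on_def by auto

lemma Inter_principal: "B \<subseteq> X \<Longrightarrow> \<Inter> (principal_on X B) = B"
  unfolding principal_on_def by auto

lemma principal_inj: "B \<subseteq> X \<Longrightarrow> C \<subseteq> X \<Longrightarrow> principal_on X B = principal_on X C \<Longrightarrow> B = C"
  by (metis Inter_principal)

lemma finite_Inter_mem:
  assumes "finite F" "F \<noteq> {}" "\<forall>A\<in>F. \<forall>B\<in>F. A \<inter> B \<in> F"
  shows "\<Inter> F \<in> F"
proof -
  have "\<Inter> G \<in> F" if "finite G" "G \<noteq> {}" "G \<subseteq> F" for G
    using that by (induction G rule: finite_ne_induct) (use assms(3) in auto)
  then show ?thesis using assms by blast
qed

lemma filter_is_principal:
  assumes "finite X" "F \<in> filters X"
  shows "\<Inter> F \<in> nonempty_subsets X \<and> F = principal_on X (\<Inter> F)"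
proof -
  have ne: "F \<noteq> {}" and sub: "\<forall>A\<in>F. A \<noteq> {} \<and> A \<subseteq> X"
    and up: "\<forall>A\<in>F. \<forall>B. A \<subseteq> B \<and> B \<subseteq> X \<longrightarrow> B \<in> F" and int: "\<forall>A\<in>F. \<forall>B\<in>F. A \<inter> B \<in> F"
    using assms(2) unfolding filters_def mem_Collect_eq by meson+
  have "finite F"
    using assms(1) sub by (meson PowI finite_Pow_iff finite_subset subsetI)
  then have least: "\<Inter> F \<in> F"
    using ne int by (rule finite_Inter_mem)
  have "F \<subseteq> principal_on X (\<Inter> F)"
    using sub unfolding principal_on_def by blast
  moreover have "principal_on X (\<Inter> F) \<subseteq> F"
  proof
    fix A assume "A \<in> principal_on X (\<Inter> F)"
    then have "\<Inter> F \<subseteq> A" "A \<subseteq> X"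
      unfolding principal_on_def by simp_all
    then show "A \<in> F"
      using up least by meson
  qed
  ultimately show ?thesis
    using sub least unfolding nonempty_subsets_def by blast
qed

lemma obtain_principal:
  assumes "finite X" "F \<in> filters X"
  obtains B where "B \<noteq> {}" "B \<subseteq> X" "F = principal_on X B"
  using filter_is_principal[OF assms] unfolding nonempty_subsets_def by blast

lemma bij_Inter_filters:
  assumes "finite X"
  shows "bij_betw Inter (filters X) (nonempty_subsets X)"
proof (rule bij_betw_byWitness[where f' = "principal_on X"])
  show "\<forall>F\<in>filters X. principal_on X (\<Inter> F) = F"
    using filter_is_principal[OF assms] by auto
  show "\<forall>B\<in>nonempty_subsets X. \<Inter> (principal_on X B) = B"
    unfolding nonempty_subsets_def by (simp add: Inter_principal)
  show "Inter ` filters X \<subseteq> nonempty_subsets X"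
    using filter_is_principal[OF assms] by auto
  show "principal_on X ` nonempty_subsets X \<subseteq> filters X"
    unfolding nonempty_subsets_def by (auto intro: principal_in_filters)
qed

lemma finite_filters:
  assumes "finite X"
  shows "finite (filters X)"
proof -
  have "finite (nonempty_subsets X)"
    using assms unfolding nonempty_subsets_def by simp
  then show ?thesis
    using bij_betw_finite[OF bij_Inter_filters[OF assms]] by simp
qed

lemma fmul_principal:
  assumes "B \<subseteq> X" "C \<subseteq> X"
  shows "fmul X f (principal_on X B) (principal_on X C) = principal_on X (setmul f B C)"
proof (rule set_eqI)
  fix S
  show "S \<in> fmul X f (principal_on X B) (principal_on X C) \<longleftrightarrow> S \<in> principal_on X (setmul f B C)"
  proof
    assume "S \<in> fmul X f (principal_on X B) (principal_on X C)"
    then obtain A Bf where S: "S \<subseteq> X" and A: "A \<in> principal_on X B"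
      and Bf: "\<forall>a\<in>A. Bf a \<in> principal_on X C" and covered: "(\<Union>a\<in>A. f a ` Bf a) \<subseteq> S"
      unfolding fmul_def by blast
    have "setmul f B C \<subseteq> (\<Union>a\<in>A. f a ` Bf a)"
    proof
      fix x assume "x \<in> setmul f B C"
      then obtain a c where "a \<in> B" "c \<in> C" "x = f a c"
        unfolding setmul_iff by blast
      moreover have "a \<in> A" "C \<subseteq> Bf a"
        using A Bf \<open>a \<in> B\<close> unfolding principal_on_def by auto
      ultimately show "x \<in> (\<Union>a\<in>A. f a ` Bf a)" by blast
    qed
    then show "S \<in> principal_on X (setmul f B C)"
      using S covered unfolding principal_on_def by blast
  next
    assume "S \<in> principal_on X (setmul f B C)"
    then have S: "S \<subseteq> X" and covered: "(\<Union>a\<in>B. f a ` C) \<subseteq> S"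
      unfolding principal_on_def setmul_def by auto
    have "B \<in> principal_on X B" and "\<forall>a\<in>B. C \<in> principal_on X C"
      using assms unfolding principal_on_def by auto
    then have "\<exists>A\<in>principal_on X B. \<exists>Bf. (\<forall>a\<in>A. Bf a \<in> principal_on X C) \<and> (\<Union>a\<in>A. f a ` Bf a) \<subseteq> S"
      using covered by (intro bexI[of _ B] exI[of _ "\<lambda>_. C"]) simp_all
    then show "S \<in> fmul X f (principal_on X B) (principal_on X C)"
      using S unfolding fmul_def by simp
  qed
qed

section \<open>Algebraic properties of \<phi>(X) for a finite semigroup X\<close>

lemma setmul_subset: "\<forall>x\<in>X. \<forall>y\<in>X. f x y \<in> X \<Longrightarrow> B \<subseteq> X \<Longrightarrow> C \<subseteq> X \<Longrightarrow> setmul f B C \<subseteq> X"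
  unfolding setmul_def by blast

lemma setmul_nonempty: "B \<noteq> {} \<Longrightarrow> C \<noteq> {} \<Longrightarrow> setmul f B C \<noteq> {}"
  unfolding setmul_def by blast

lemma setmul_triple_left: "setmul f (setmul f A B) C = (\<Union>a\<in>A. \<Union>b\<in>B. \<Union>c\<in>C. {f (f a b) c})"
  unfolding setmul_def by auto

lemma setmul_triple_right: "setmul f A (setmul f B C) = (\<Union>a\<in>A. \<Union>b\<in>B. \<Union>c\<in>C. {f a (f b c)})"
  unfolding setmul_def by auto

lemma setmul_assoc:
  assumes assoc: "\<forall>x\<in>X. \<forall>y\<in>X. \<forall>z\<in>X. f (f x y) z = f x (f y z)"
    and "A \<subseteq> X" "B \<subseteq> X" "C \<subseteq> X"
  shows "setmul f (setmul f A B) C = setmul f A (setmul f B C)"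
  unfolding setmul_triple_left setmul_triple_right
  using assms by (intro SUP_cong refl) (simp add: subset_iff)

lemma setmul_comm:
  assumes "\<forall>x\<in>X. \<forall>y\<in>X. f x y = f y x" "A \<subseteq> X" "B \<subseteq> X"
  shows "setmul f A B = setmul f B A"
proof -
  have "setmul f A B = (\<Union>a\<in>A. \<Union>b\<in>B. {f a b})"
    unfolding setmul_def by auto
  also have "\<dots> = (\<Union>a\<in>A. \<Union>b\<in>B. {f b a})"
    using assms by (intro SUP_cong refl) (simp add: subset_iff)
  also have "\<dots> = setmul f B A"
    unfolding setmul_def by auto
  finally show ?thesis .
qed

lemma setmul_selective_idem:
  assumes "\<forall>x\<in>X. \<forall>y\<in>X. f x y \<in> {x, y}" "B \<subseteq> X"
  shows "setmul f B B = B"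
proof
  show "setmul f B B \<subseteq> B"
  proof
    fix x assume "x \<in> setmul f B B"
    then obtain a b where "a \<in> B" "b \<in> B" "x = f a b"
      unfolding setmul_iff by blast
    moreover then have "f a b \<in> {a, b}" using assms(2) by (intro assms(1)[rule_format]) auto
    ultimately show "x \<in> B" by auto
  qed
  show "B \<subseteq> setmul f B B"
  proof
    fix x assume "x \<in> B"
    moreover then have "f x x \<in> {x, x}" using assms(2) by (intro assms(1)[rule_format]) auto
    ultimately show "x \<in> setmul f B B" unfolding setmul_iff by force
  qed
qed

lemma setmul_cube:
  assumes "\<forall>x\<in>X. \<forall>y\<in>X. \<forall>z\<in>X. f x (f y z) \<in> {x, y, z}" "\<forall>x\<in>X. f x (f x x) = x" "B \<subseteq> X"
  shows "setmul f B (setmul f B B) = B"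
proof
  show "setmul f B (setmul f B B) \<subseteq> B"
  proof
    fix x assume "x \<in> setmul f B (setmul f B B)"
    then obtain a b c where "a \<in> B" "b \<in> B" "c \<in> B" "x = f a (f b c)"
      unfolding setmul_def by blast
    moreover then have "f a (f b c) \<in> {a, b, c}" using assms(3) by (intro assms(1)[rule_format]) auto
    ultimately show "x \<in> B" by auto
  qed
  show "B \<subseteq> setmul f B (setmul f B B)"
  proof
    fix x assume "x \<in> B"
    moreover then have "f x x \<in> setmul f B B" unfolding setmul_iff by blast
    moreover have "f x (f x x) = x" using assms(2,3) \<open>x \<in> B\<close> by auto
    ultimately show "x \<in> setmul f B (setmul f B B)" by (metis setmul_iff)
  qed
qed

text \<open>Throughout, X is finite, so every filter is principal and each property
  of fmul reduces to the corresponding property of setmul.\<close>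

lemma fmul_closed:
  assumes fin: "finite X" and closed: "\<forall>x\<in>X. \<forall>y\<in>X. f x y \<in> X"
    and "F \<in> filters X" "G \<in> filters X"
  shows "fmul X f F G \<in> filters X"
proof -
  obtain B where B: "B \<noteq> {}" "B \<subseteq> X" "F = principal_on X B"
    using obtain_principal[OF fin \<open>F \<in> filters X\<close>] .
  obtain C where C: "C \<noteq> {}" "C \<subseteq> X" "G = principal_on X C"
    using obtain_principal[OF fin \<open>G \<in> filters X\<close>] .
  have "setmul f B C \<noteq> {}" "setmul f B C \<subseteq> X"
    using setmul_nonempty[OF B(1) C(1)] setmul_subset[OF closed B(2) C(2)] .
  then show ?thesis
    using B C by (simp add: fmul_principal principal_in_filters)
qed

lemma filters_semigroup:
  assumes fin: "finite X" and closed: "\<forall>x\<in>X. \<forall>y\<in>X. f x y \<in> X"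
    and assoc: "\<forall>x\<in>X. \<forall>y\<in>X. \<forall>z\<in>X. f (f x y) z = f x (f y z)"
  shows "semigroup_on (filters X) (fmul X f)"
  unfolding semigroup_on_def
proof (intro conjI ballI)
  show "fmul X f F G \<in> filters X" if "F \<in> filters X" "G \<in> filters X" for F G
    using fmul_closed[OF fin closed that] .
  fix F G H assume "F \<in> filters X" "G \<in> filters X" "H \<in> filters X"
  obtain B where B: "B \<subseteq> X" "F = principal_on X B"
    using obtain_principal[OF fin \<open>F \<in> filters X\<close>] by metis
  obtain C where C: "C \<subseteq> X" "G = principal_on X C"
    using obtain_principal[OF fin \<open>G \<in> filters X\<close>] by metis
  obtain D where D: "D \<subseteq> X" "H = principal_on X D"
    using obtain_principal[OF fin \<open>H \<in> filters X\<close>] by metis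
  have "setmul f B C \<subseteq> X" "setmul f C D \<subseteq> X"
    using setmul_subset[OF closed] B C D by auto
  then show "fmul X f (fmul X f F G) H = fmul X f F (fmul X f G H)"
    using B C D by (simp add: fmul_principal setmul_assoc[OF assoc])
qed

lemma filters_commutative:
  assumes fin: "finite X" and comm: "\<forall>x\<in>X. \<forall>y\<in>X. f x y = f y x"
  shows "commutative_on (filters X) (fmul X f)"
  unfolding commutative_on_def
proof (intro ballI)
  fix F G assume "F \<in> filters X" "G \<in> filters X"
  obtain B where B: "B \<subseteq> X" "F = principal_on X B"
    using obtain_principal[OF fin \<open>F \<in> filters X\<close>] by metis
  obtain C where C: "C \<subseteq> X" "G = principal_on X C"
    using obtain_principal[OF fin \<open>G \<in> filters X\<close>] by metis
  show "fmul X f F G = fmul X f G F"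
    using B C by (simp add: fmul_principal setmul_comm[OF comm])
qed

lemma filters_idempotent:
  assumes fin: "finite X" and select: "\<forall>x\<in>X. \<forall>y\<in>X. f x y \<in> {x, y}"
  shows "\<forall>F\<in>filters X. fmul X f F F = F"
proof
  fix F assume "F \<in> filters X"
  obtain B where B: "B \<subseteq> X" "F = principal_on X B"
    using obtain_principal[OF fin \<open>F \<in> filters X\<close>] by metis
  show "fmul X f F F = F"
    using B by (simp add: fmul_principal setmul_selective_idem[OF select])
qed

lemma filters_boolean:
  assumes fin: "finite X" and closed: "\<forall>x\<in>X. \<forall>y\<in>X. f x y \<in> X"
    and select3: "\<forall>x\<in>X. \<forall>y\<in>X. \<forall>z\<in>X. f x (f y z) \<in> {x, y, z}"
    and cube: "\<forall>x\<in>X. f x (f x x) = x"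
  shows "boolean_on (filters X) (fmul X f)"
  unfolding boolean_on_def
proof
  fix F assume "F \<in> filters X"
  obtain B where B: "B \<subseteq> X" "F = principal_on X B"
    using obtain_principal[OF fin \<open>F \<in> filters X\<close>] by metis
  have "setmul f B B \<subseteq> X"
    using setmul_subset[OF closed B(1) B(1)] .
  then show "fmul X f F (fmul X f F F) = F"
    using B by (simp add: fmul_principal setmul_cube[OF select3 cube])
qed

section \<open>The semigroups L_n, C_2 and their disjoint ordered union\<close>

lemma finite_Ln: "finite (Ln n)"
  unfolding Ln_def by simp

lemma finite_C2: "finite C2"
  unfolding C2_def by simp

lemma Ln_min_closed: "\<forall>x\<in>Ln n. \<forall>y\<in>Ln n. min x y \<in> Ln n"
  unfolding Ln_def by (auto simp: min_def)

lemma C2_mult_closed: "\<forall>x\<in>C2. \<forall>y\<in>C2. x * y \<in> C2"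
  unfolding C2_def by auto

lemma min_assoc_on: "\<forall>x\<in>X :: 'a::linorder set. \<forall>y\<in>X. \<forall>z\<in>X. min (min x y) z = min x (min y z)"
  by (intro ballI min.assoc)

lemma min_comm_on: "\<forall>x\<in>X :: 'a::linorder set. \<forall>y\<in>X. min x y = min y x"
  by (intro ballI min.commute)

lemma min_selective: "\<forall>x\<in>X :: 'a::linorder set. \<forall>y\<in>X. min x y \<in> {x, y}"
  by (simp add: min_def)

lemma C2_mult_assoc: "\<forall>x\<in>C2. \<forall>y\<in>C2. \<forall>z\<in>C2. x * y * z = x * (y * z)"
  by (simp add: mult.assoc)

lemma C2_mult_comm: "\<forall>x\<in>C2. \<forall>y\<in>C2. x * y = y * x"
  by (simp add: mult.commute)

lemma C2_select3: "\<forall>x\<in>C2. \<forall>y\<in>C2. \<forall>z\<in>C2. x * (y * z) \<in> {x, y, z}"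
  unfolding C2_def by auto

lemma C2_cube: "\<forall>x\<in>C2. x * (x * x) = x"
  unfolding C2_def by auto

lemma finite_dou_carrier: "finite X \<Longrightarrow> finite Y \<Longrightarrow> finite (dou_carrier X Y)"
  unfolding dou_carrier_def by simp

lemma dou_closed:
  "\<forall>x\<in>X. \<forall>y\<in>X. f x y \<in> X \<Longrightarrow> \<forall>x\<in>Y. \<forall>y\<in>Y. g x y \<in> Y \<Longrightarrow>
   \<forall>x\<in>dou_carrier X Y. \<forall>y\<in>dou_carrier X Y. dou_mul f g x y \<in> dou_carrier X Y"
  unfolding dou_carrier_def by auto

lemma dou_assoc:
  "\<forall>x\<in>X. \<forall>y\<in>X. \<forall>z\<in>X. f (f x y) z = f x (f y z) \<Longrightarrow>
   \<forall>x\<in>Y. \<forall>y\<in>Y. \<forall>z\<in>Y. g (g x y) z = g x (g y z) \<Longrightarrow>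
   \<forall>x\<in>dou_carrier X Y. \<forall>y\<in>dou_carrier X Y. \<forall>z\<in>dou_carrier X Y.
     dou_mul f g (dou_mul f g x y) z = dou_mul f g x (dou_mul f g y z)"
  unfolding dou_carrier_def by auto

lemma dou_comm:
  "\<forall>x\<in>X. \<forall>y\<in>X. f x y = f y x \<Longrightarrow> \<forall>x\<in>Y. \<forall>y\<in>Y. g x y = g y x \<Longrightarrow>
   \<forall>x\<in>dou_carrier X Y. \<forall>y\<in>dou_carrier X Y. dou_mul f g x y = dou_mul f g y x"
  unfolding dou_carrier_def by auto

lemma dou_select3:
  assumes "\<forall>x\<in>X. \<forall>y\<in>X. f x y \<in> {x, y}" "\<forall>x\<in>Y. \<forall>y\<in>Y. \<forall>z\<in>Y. g x (g y z) \<in> {x, y, z}"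
  shows "\<forall>x\<in>dou_carrier X Y. \<forall>y\<in>dou_carrier X Y. \<forall>z\<in>dou_carrier X Y.
           dou_mul f g x (dou_mul f g y z) \<in> {x, y, z}"
proof (intro ballI)
  have select_X: "f x (f y z) \<in> {x, y, z}" if "x \<in> X" "y \<in> X" "z \<in> X" for x y z
    using assms(1) that by (metis insert_iff singletonD)
  fix x y z assume "x \<in> dou_carrier X Y" "y \<in> dou_carrier X Y" "z \<in> dou_carrier X Y"
  then show "dou_mul f g x (dou_mul f g y z) \<in> {x, y, z}"
    using select_X assms unfolding dou_carrier_def by (auto; metis)
qed

lemma dou_cube:
  assumes "\<forall>x\<in>X. \<forall>y\<in>X. f x y \<in> {x, y}" "\<forall>x\<in>Y. g x (g x x) = x"
  shows "\<forall>x\<in>dou_carrier X Y. dou_mul f g x (dou_mul f g x x) = x"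
proof
  fix x assume "x \<in> dou_carrier X Y"
  then show "dou_mul f g x (dou_mul f g x x) = x"
    using assms unfolding dou_carrier_def by (auto; metis)
qed

section \<open>\<phi>(L_n \<squnion> C_2) as a reduced product\<close>

abbreviation LC :: "nat \<Rightarrow> (nat + int) set" where
  "LC n \<equiv> dou_carrier (Ln n) C2"

abbreviation lc_mul :: "nat + int \<Rightarrow> nat + int \<Rightarrow> nat + int" where
  "lc_mul \<equiv> dou_mul min (*)"

text \<open>The ideal \<phi>(L_n) of \<phi>(L_{n+1}): the filters containing L_n.\<close>
abbreviation Ln_ideal :: "nat \<Rightarrow> nat set set set" where
  "Ln_ideal n \<equiv> {F \<in> filters (Ln (Suc n)). Ln n \<in> F}"

definition collapse :: "nat \<Rightarrow> nat + int \<Rightarrow> nat" where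
  "collapse n x = (case x of Inl a \<Rightarrow> a | Inr _ \<Rightarrow> n)"

definition encode :: "nat \<Rightarrow> (nat + int) set \<Rightarrow> nat set set + (nat set set \<times> int set set)" where
  "encode n B =
     (if Inr -` B = {} then Inl (principal_on (Ln (Suc n)) (collapse n ` B))
      else Inr (principal_on (Ln (Suc n)) (collapse n ` B), principal_on C2 (Inr -` B)))"

lemma LC_cases:
  assumes "x \<in> LC n"
  obtains a where "x = Inl a" "a < n" | b where "x = Inr b" "b \<in> C2"
  using assms unfolding dou_carrier_def Ln_def by auto

lemma collapse_mul:
  assumes "x \<in> LC n" "y \<in> LC n"
  shows "collapse n (lc_mul x y) = min (collapse n x) (collapse n y)"
  using assms by (cases rule: LC_cases[OF assms(1)]; cases rule: LC_cases[OF assms(2)])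
    (simp_all add: collapse_def)

lemma collapse_setmul:
  assumes "B \<subseteq> LC n" "C \<subseteq> LC n"
  shows "collapse n ` setmul lc_mul B C = setmul min (collapse n ` B) (collapse n ` C)"
proof -
  have "collapse n ` setmul lc_mul B C = (\<Union>x\<in>B. (\<lambda>y. collapse n (lc_mul x y)) ` C)"
    unfolding setmul_def by (simp add: image_UN image_image)
  also have "\<dots> = (\<Union>x\<in>B. (\<lambda>y. min (collapse n x) (collapse n y)) ` C)"
    using assms by (intro SUP_cong image_cong refl) (simp add: collapse_mul subset_iff)
  also have "\<dots> = setmul min (collapse n ` B) (collapse n ` C)"
    unfolding setmul_def by (simp add: image_image)
  finally show ?thesis .
qed

lemma dou_mul_eq_Inr: "dou_mul f g x y = Inr z \<longleftrightarrow> (\<exists>p q. x = Inr p \<and> y = Inr q \<and> z = g p q)"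
  by (cases x; cases y) auto

lemma Inr_vimage_setmul: "Inr -` setmul (dou_mul f g) B C = setmul g (Inr -` B) (Inr -` C)"
proof (rule set_eqI)
  fix z
  have "z \<in> Inr -` setmul (dou_mul f g) B C \<longleftrightarrow> (\<exists>x\<in>B. \<exists>y\<in>C. dou_mul f g x y = Inr z)"
    unfolding vimage_eq setmul_iff by (simp add: eq_commute)
  also have "\<dots> \<longleftrightarrow> (\<exists>p\<in>Inr -` B. \<exists>q\<in>Inr -` C. z = g p q)"
    unfolding dou_mul_eq_Inr by auto
  finally show "z \<in> Inr -` setmul (dou_mul f g) B C \<longleftrightarrow> z \<in> setmul g (Inr -` B) (Inr -` C)"
    unfolding setmul_iff .
qed

lemma collapse_range: "x \<in> LC n \<Longrightarrow> collapse n x \<in> Ln (Suc n)"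
  by (cases rule: LC_cases) (auto simp: collapse_def Ln_def)

lemma collapse_subset: "B \<subseteq> LC n \<Longrightarrow> collapse n ` B \<subseteq> Ln (Suc n)"
  using collapse_range by blast

lemma collapse_below_top: "x \<in> LC n \<Longrightarrow> collapse n x = n \<longleftrightarrow> x \<notin> range Inl"
  by (cases rule: LC_cases) (auto simp: collapse_def)

lemma Inr_vimage_subset: "B \<subseteq> dou_carrier X Y \<Longrightarrow> Inr -` B \<subseteq> Y"
  unfolding dou_carrier_def by auto

lemma top_in_collapse:
  assumes "B \<subseteq> LC n"
  shows "n \<in> collapse n ` B \<longleftrightarrow> Inr -` B \<noteq> {}"
proof
  assume "n \<in> collapse n ` B"
  then obtain x where "x \<in> B" "collapse n x = n" by auto
  moreover then have "x \<notin> range Inl"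
    using assms collapse_below_top by blast
  ultimately show "Inr -` B \<noteq> {}"
    by (cases x) auto
next
  assume "Inr -` B \<noteq> {}"
  then obtain b where "Inr b \<in> B" by auto
  then show "n \<in> collapse n ` B"
    by (force simp: collapse_def)
qed

lemma principal_in_Ln_ideal:
  assumes "D \<noteq> {}" "D \<subseteq> Ln (Suc n)"
  shows "principal_on (Ln (Suc n)) D \<in> Ln_ideal n \<longleftrightarrow> n \<notin> D"
proof -
  have "Ln n \<subseteq> Ln (Suc n)" "D \<subseteq> Ln n \<longleftrightarrow> n \<notin> D"
    using assms(2) unfolding Ln_def by (auto simp: less_Suc_eq)
  then show ?thesis
    using principal_in_filters[OF assms] unfolding principal_on_def by auto
qed

text \<open>A subset of L_n \<squnion> C_2 is determined by its collapse D and its C_2-part E,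
  and every pair (D, E) with n \<in> D iff E \<noteq> {} arises this way.\<close>
definition rebuild :: "nat \<Rightarrow> nat set \<Rightarrow> int set \<Rightarrow> (nat + int) set" where
  "rebuild n D E = Inl ` (D - {n}) \<union> Inr ` E"

lemma rebuild_from_parts:
  assumes "B \<subseteq> LC n"
  shows "B = rebuild n (collapse n ` B) (Inr -` B)"
  unfolding rebuild_def
proof
  show "B \<subseteq> Inl ` (collapse n ` B - {n}) \<union> Inr ` (Inr -` B)"
  proof
    fix x assume x: "x \<in> B"
    show "x \<in> Inl ` (collapse n ` B - {n}) \<union> Inr ` (Inr -` B)"
    proof (cases x)
      case (Inl a)
      have "collapse n x \<noteq> n"
        using collapse_below_top[OF subsetD[OF assms x]] Inl by simp
      moreover have "collapse n x = a"
        using Inl by (simp add: collapse_def)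
      ultimately have "a \<in> collapse n ` B - {n}"
        using x by (metis DiffI imageI singletonD)
      then show ?thesis
        using Inl by simp
    next
      case (Inr b)
      then show ?thesis
        using x by simp
    qed
  qed
  show "Inl ` (collapse n ` B - {n}) \<union> Inr ` (Inr -` B) \<subseteq> B"
  proof
    fix x assume "x \<in> Inl ` (collapse n ` B - {n}) \<union> Inr ` (Inr -` B)"
    then consider (left) y where "y \<in> B" "collapse n y \<noteq> n" "x = Inl (collapse n y)"
      | (right) "x \<in> Inr ` (Inr -` B)"
      by auto
    then show "x \<in> B"
    proof cases
      case left
      then obtain c where "y = Inl c"
        using collapse_below_top[OF subsetD[OF assms \<open>y \<in> B\<close>]] by auto
      then show ?thesis
        using left by (simp add: collapse_def)
    next
      case right
      then show ?thesis by auto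
    qed
  qed
qed

lemma parts_of_rebuild:
  assumes "D \<subseteq> Ln (Suc n)" "E \<subseteq> C2" "n \<in> D \<longleftrightarrow> E \<noteq> {}"
  shows "rebuild n D E \<subseteq> LC n" "collapse n ` rebuild n D E = D" "Inr -` rebuild n D E = E"
proof -
  show "rebuild n D E \<subseteq> LC n"
    using assms(1,2) unfolding rebuild_def dou_carrier_def Ln_def by (auto simp: less_Suc_eq)
  have "collapse n ` rebuild n D E = (D - {n}) \<union> (\<lambda>_. n) ` E"
    unfolding rebuild_def by (simp add: image_Un image_image collapse_def)
  then show "collapse n ` rebuild n D E = D"
    using assms(3) by auto
  show "Inr -` rebuild n D E = E"
    unfolding rebuild_def by auto
qed

lemma rp_pX_encode: "rp_pX (encode n B) = principal_on (Ln (Suc n)) (collapse n ` B)"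
  unfolding encode_def by simp

lemma encode_mul:
  assumes B: "B \<in> nonempty_subsets (LC n)" and C: "C \<in> nonempty_subsets (LC n)"
  shows "encode n (setmul lc_mul B C) =
         rp_mul (Ln_ideal n) (fmul (Ln (Suc n)) min) (fmul C2 (*)) (encode n B) (encode n C)"
proof -
  let ?S = "setmul lc_mul B C" and ?L = "Ln (Suc n)"
  have BC: "B \<subseteq> LC n" "C \<subseteq> LC n" "B \<noteq> {}" "C \<noteq> {}"
    using B C unfolding nonempty_subsets_def by auto
  have S: "?S \<subseteq> LC n" "?S \<noteq> {}"
    using setmul_subset[OF dou_closed[OF Ln_min_closed C2_mult_closed] BC(1,2)]
      setmul_nonempty[OF BC(3,4)] by auto
  have first: "fmul ?L min (rp_pX (encode n B)) (rp_pX (encode n C)) = principal_on ?L (collapse n ` ?S)"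
    using fmul_principal[OF collapse_subset collapse_subset, OF BC(1,2)]
    by (simp add: rp_pX_encode collapse_setmul[OF BC(1,2)])
  have in_ideal: "principal_on ?L (collapse n ` ?S) \<in> Ln_ideal n \<longleftrightarrow> Inr -` ?S = {}"
    using principal_in_Ln_ideal[of "collapse n ` ?S" n] collapse_subset[OF S(1)] S(2)
      top_in_collapse[OF S(1)] by auto
  show ?thesis
  proof (cases "Inr -` ?S = {}")
    case True
    then show ?thesis
      using in_ideal unfolding rp_mul_def Let_def first by (simp add: encode_def)
  next
    case False
    then have "setmul (*) (Inr -` B) (Inr -` C) \<noteq> {}"
      by (simp add: Inr_vimage_setmul)
    then have parts: "Inr -` B \<noteq> {}" "Inr -` C \<noteq> {}"
      unfolding setmul_def by auto
    have "fmul C2 (*) (principal_on C2 (Inr -` B)) (principal_on C2 (Inr -` C)) = principal_on C2 (Inr -` ?S)"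
      using fmul_principal[OF Inr_vimage_subset Inr_vimage_subset, OF BC(1,2)]
      by (simp add: Inr_vimage_setmul)
    then show ?thesis
      using False in_ideal parts unfolding rp_mul_def Let_def first by (simp add: encode_def)
  qed
qed

text \<open>encode is injective: its two coordinates recover the collapse and the C_2-part.\<close>
lemma encode_inj: "inj_on (encode n) (nonempty_subsets (LC n))"
proof (rule inj_onI)
  fix B C assume "B \<in> nonempty_subsets (LC n)" "C \<in> nonempty_subsets (LC n)"
    and eq: "encode n B = encode n C"
  then have BC: "B \<subseteq> LC n" "C \<subseteq> LC n"
    unfolding nonempty_subsets_def by auto
  have "principal_on (Ln (Suc n)) (collapse n ` B) = principal_on (Ln (Suc n)) (collapse n ` C)"
    using arg_cong[OF eq, of rp_pX] by (simp add: rp_pX_encode)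
  then have collapse_eq: "collapse n ` B = collapse n ` C"
    using principal_inj collapse_subset BC by metis
  have "Inr -` B = {} \<longleftrightarrow> Inr -` C = {}"
    using eq unfolding encode_def by (auto split: if_splits)
  then have "Inr -` B = Inr -` C"
    using eq principal_inj[OF Inr_vimage_subset Inr_vimage_subset, OF BC]
    unfolding encode_def by (auto split: if_splits)
  then show "B = C"
    using rebuild_from_parts[OF BC(1)] rebuild_from_parts[OF BC(2)] collapse_eq by simp
qed

lemma rp_carrier_Inl: "Inl F \<in> rp_carrier X I Y \<longleftrightarrow> F \<in> I"
  unfolding rp_carrier_def by blast

lemma rp_carrier_Inr: "Inr (F, H) \<in> rp_carrier X I Y \<longleftrightarrow> F \<in> X \<and> F \<notin> I \<and> H \<in> Y"
  unfolding rp_carrier_def by blast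

text \<open>encode is onto the reduced product: an element over a filter outside \<phi>(L_n) needs
  a C_2-part, an element of \<phi>(L_n) comes from a subset of L_n.\<close>
lemma encode_image:
  "encode n ` nonempty_subsets (LC n) = rp_carrier (filters (Ln (Suc n))) (Ln_ideal n) (filters C2)"
proof
  show "encode n ` nonempty_subsets (LC n) \<subseteq> rp_carrier (filters (Ln (Suc n))) (Ln_ideal n) (filters C2)"
  proof
    fix y assume "y \<in> encode n ` nonempty_subsets (LC n)"
    then obtain B where B: "B \<subseteq> LC n" "B \<noteq> {}" and y: "y = encode n B"
      unfolding nonempty_subsets_def by auto
    have D: "collapse n ` B \<noteq> {}" "collapse n ` B \<subseteq> Ln (Suc n)"
      using B collapse_subset by auto
    show "y \<in> rp_carrier (filters (Ln (Suc n))) (Ln_ideal n) (filters C2)"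
      using principal_in_Ln_ideal[OF D] top_in_collapse[OF B(1)] principal_in_filters[OF D]
        principal_in_filters[OF _ Inr_vimage_subset[OF B(1)]]
      unfolding y encode_def by (simp add: rp_carrier_Inl rp_carrier_Inr)
  qed
  show "rp_carrier (filters (Ln (Suc n))) (Ln_ideal n) (filters C2) \<subseteq> encode n ` nonempty_subsets (LC n)"
  proof
    fix y assume y: "y \<in> rp_carrier (filters (Ln (Suc n))) (Ln_ideal n) (filters C2)"
    have "rp_pX y \<in> filters (Ln (Suc n))"
      using y unfolding rp_carrier_def by auto
    then obtain F where F: "F \<in> filters (Ln (Suc n))" "rp_pX y = F"
      by simp
    obtain D where D: "D \<noteq> {}" "D \<subseteq> Ln (Suc n)" "F = principal_on (Ln (Suc n)) D"
      using obtain_principal[OF finite_Ln F(1)] .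
    obtain E where E: "E \<subseteq> C2" "n \<in> D \<longleftrightarrow> E \<noteq> {}"
      and y_eq: "y = (if E = {} then Inl (principal_on (Ln (Suc n)) D)
                      else Inr (principal_on (Ln (Suc n)) D, principal_on C2 E))"
    proof (cases y)
      case (Inl G)
      then have "n \<notin> D"
        using y F D principal_in_Ln_ideal[OF D(1,2)] by (simp add: rp_carrier_Inl)
      then show ?thesis
        using that[of "{}"] Inl F D by simp
    next
      case (Inr p)
      then obtain G H where p: "y = Inr (G, H)" and "G \<notin> Ln_ideal n" "H \<in> filters C2"
        using y unfolding rp_carrier_def by auto
      moreover obtain E where "E \<noteq> {}" "E \<subseteq> C2" "H = principal_on C2 E"
        using obtain_principal[OF finite_C2 \<open>H \<in> filters C2\<close>] .
      moreover have "n \<in> D"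
        using calculation F D principal_in_Ln_ideal[OF D(1,2)] by simp
      ultimately show ?thesis
        using that[of E] F D by simp
    qed
    have "encode n (rebuild n D E) = y"
      using parts_of_rebuild[OF D(2) E] unfolding encode_def y_eq by (cases "E = {}") simp_all
    moreover have "rebuild n D E \<in> nonempty_subsets (LC n)"
      using parts_of_rebuild[OF D(2) E] D(1) unfolding nonempty_subsets_def by auto
    ultimately show "y \<in> encode n ` nonempty_subsets (LC n)"
      by blast
  qed
qed

lemma filters_LC_iso:
  "semigroup_iso (filters (LC n)) (fmul (LC n) lc_mul)
     (rp_carrier (filters (Ln (Suc n))) (Ln_ideal n) (filters C2))
     (rp_mul (Ln_ideal n) (fmul (Ln (Suc n)) min) (fmul C2 (*)))"
  unfolding semigroup_iso_def
proof (intro exI conjI ballI)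
  have fin: "finite (LC n)"
    using finite_dou_carrier[OF finite_Ln finite_C2] .
  show "bij_betw (encode n \<circ> Inter) (filters (LC n))
          (rp_carrier (filters (Ln (Suc n))) (Ln_ideal n) (filters C2))"
    using bij_betw_trans[OF bij_Inter_filters[OF fin] bij_betw_imageI[OF encode_inj encode_image]] .
  fix F G assume "F \<in> filters (LC n)" "G \<in> filters (LC n)"
  then have B: "\<Inter> F \<in> nonempty_subsets (LC n)" "F = principal_on (LC n) (\<Inter> F)"
    and C: "\<Inter> G \<in> nonempty_subsets (LC n)" "G = principal_on (LC n) (\<Inter> G)"
    using filter_is_principal[OF fin] by auto
  have sub: "\<Inter> F \<subseteq> LC n" "\<Inter> G \<subseteq> LC n"
    using B(1) C(1) unfolding nonempty_subsets_def by auto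
  then have "setmul lc_mul (\<Inter> F) (\<Inter> G) \<subseteq> LC n"
    using setmul_subset[OF dou_closed[OF Ln_min_closed C2_mult_closed]] by blast
  then have "\<Inter> (fmul (LC n) lc_mul F G) = setmul lc_mul (\<Inter> F) (\<Inter> G)"
    using fmul_principal[OF sub] B(2) C(2) Inter_principal by metis
  then show "(encode n \<circ> Inter) (fmul (LC n) lc_mul F G) =
      rp_mul (Ln_ideal n) (fmul (Ln (Suc n)) min) (fmul C2 (*)) ((encode n \<circ> Inter) F) ((encode n \<circ> Inter) G)"
    using encode_mul[OF B(1) C(1)] by simp
qed

theorem proposition4p8:
  fixes n :: nat
  shows "(finite (filters (Ln n)) \<and> semilattice_on (filters (Ln n)) (fmul (Ln n) min))
       \<and> (semigroup_on (filters (dou_carrier (Ln n) C2)) (fmul (dou_carrier (Ln n) C2) (dou_mul min (*)))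
       \<and> commutative_on (filters (dou_carrier (Ln n) C2)) (fmul (dou_carrier (Ln n) C2) (dou_mul min (*)))
       \<and> boolean_on (filters (dou_carrier (Ln n) C2)) (fmul (dou_carrier (Ln n) C2) (dou_mul min (*)))
       \<and> semigroup_iso
           (filters (dou_carrier (Ln n) C2)) (fmul (dou_carrier (Ln n) C2) (dou_mul min (*)))
           (rp_carrier (filters (Ln (Suc n))) {F \<in> filters (Ln (Suc n)). Ln n \<in> F} (filters C2))
           (rp_mul {F \<in> filters (Ln (Suc n)). Ln n \<in> F} (fmul (Ln (Suc n)) min) (fmul C2 (*))))"
proof -
  have fin: "finite (LC n)"
    using finite_dou_carrier[OF finite_Ln finite_C2] .
  have "semilattice_on (filters (Ln n)) (fmul (Ln n) min)"
    unfolding semilattice_on_def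
    using filters_semigroup[OF finite_Ln Ln_min_closed min_assoc_on]
      filters_commutative[OF finite_Ln min_comm_on] filters_idempotent[OF finite_Ln min_selective]
    by simp
  moreover have "semigroup_on (filters (LC n)) (fmul (LC n) lc_mul)"
    using filters_semigroup[OF fin dou_closed[OF Ln_min_closed C2_mult_closed]
        dou_assoc[OF min_assoc_on C2_mult_assoc]] .
  moreover have "commutative_on (filters (LC n)) (fmul (LC n) lc_mul)"
    using filters_commutative[OF fin dou_comm[OF min_comm_on C2_mult_comm]] .
  moreover have "boolean_on (filters (LC n)) (fmul (LC n) lc_mul)"
    using filters_boolean[OF fin dou_closed[OF Ln_min_closed C2_mult_closed]
        dou_select3[of "Ln n" min C2 "(*)", OF min_selective C2_select3]
        dou_cube[of "Ln n" min C2 "(*)", OF min_selective C2_cube]] .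
  ultimately show ?thesis
    using finite_filters[OF finite_Ln] filters_LC_iso by simp
qed

end
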